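(* Let $d\geq 1$, let $p\in[1,\infty)\setminus\{2\}$, let $\beta>0$, and let $\bm{Q}_1,\bm{Q}_2$ be $d\times d$ symmetric positive definite matrices. Define $$\bm{Q}(\beta)=\left(1+\frac{1}{\beta}\right)^{1/p}\bm{Q}_1+(1+\beta)^{1/p}\bm{Q}_2 .$$ Then $\mathcal{E}(\bm{0},\bm{Q}(\beta))\supseteq \mathcal{E}(\bm{0},\bm{Q}_1)+_p\mathcal{E}(\bm{0},\bm{Q}_2)$.
   Context: For $\bm{q}\in\mathbb{R}^d$ and a symmetric positive definite $d\times d$ matrix $\bm{Q}$, the ellipsoid is $\mathcal{E}(\bm{q},\bm{Q})=\{\bm{x}\in\mathbb{R}^d:(\bm{x}-\bm{q})^\top\bm{Q}^{-1}(\bm{x}-\bm{q})\leq 1\}$. The support function of a compact convex set $\mathcal{K}\subset\mathbb{R}^d$ is $h_{\mathcal{K}}(\bm{y})=\sup\{\langle\bm{x},\bm{y}\rangle:\bm{x}\in\mathcal{K}\}$, $\bm{y}\in\mathbb{R}^d$; it determines $\mathcal{K}$ uniquely. For compact convex sets $\mathcal{K}_1,\mathcal{K}_2\subset\mathbb{R}^d$ and $1\le p<\infty$, the (Firey) $p$-sum $\mathcal{K}_1+_p\mathcal{K}_2$ is the compact convex set whose support function is $h(\bm{y})=\left(h_{\mathcal{K}_1}^p(\bm{y})+h_{\mathcal{K}_2}^p(\bm{y})\right)^{1/p}$. (For $\mathcal{E}(\bm{0},\bm{Q})$ one has $h(\bm{y})=\sqrt{\bm{y}^\top\bm{Q}\bm{y}}\ge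 0$.) *)

theory Defs
  imports "HOL-Analysis.Analysis"
begin

definition sym_pos_def_mat :: "real^'n^'n \<Rightarrow> bool" where
  "sym_pos_def_mat Q \<longleftrightarrow> transpose Q = Q \<and> (\<forall>x. x \<noteq> 0 \<longrightarrow> x \<bullet> (Q *v x) > 0)"

definition ellipsoid :: "real^'n \<Rightarrow> real^'n^'n \<Rightarrow> (real^'n) set" where
  "ellipsoid q Q = {x. (x - q) \<bullet> (matrix_inv Q *v (x - q)) \<le> 1}"

definition support_fun :: "(real^'n) set \<Rightarrow> real^'n \<Rightarrow> real" where
  "support_fun K y = (SUP x\<in>K. x \<bullet> y)"

text \<open>Firey p-sum: the (compact convex) set whose support function is
  (h_K1^p + h_K2^p)^(1/p), realised as the intersection of the half-spaces
  {x. <x,y> <= h(y)} (Wulff shape of h).\<close>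
definition firey_sum :: "real \<Rightarrow> (real^'n) set \<Rightarrow> (real^'n) set \<Rightarrow> (real^'n) set" where
  "firey_sum p K1 K2 = {x. \<forall>y. x \<bullet> y \<le>
      (support_fun K1 y powr p + support_fun K2 y powr p) powr (1/p)}"

end

theory Submission
  imports Defs
begin

text \<open>
  For \<open>x\<close> in the \<open>p\<close>-sum and any direction \<open>y\<close>, the support functions of the
  ellipsoids are bounded by \<open>a = \<surd>(y\<^sup>T Q\<^sub>1 y)\<close> and \<open>b = \<surd>(y\<^sup>T Q\<^sub>2 y)\<close>, so
  \<open>\<langle>x, y\<rangle> \<le> (a\<^sup>p + b\<^sup>p)\<^bsup>1/p\<^esup>\<close>. The scalar inequality
  \<open>(a\<^sup>p + b\<^sup>p)\<^bsup>2/p\<^esup> \<le> (1 + 1/\<beta>)\<^bsup>1/p\<^esup> a\<^sup>2 + (1 + \<beta>)\<^bsup>1/p\<^esup> b\<^sup>2\<close> turns this into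
  \<open>\<langle>x, y\<rangle> \<le> \<surd>(y\<^sup>T Q(\<beta>) y)\<close>; it follows from convexity of \<open>t \<mapsto> t\<^bsup>2/p\<^esup>\<close> with
  weights \<open>\<beta>/(1+\<beta>)\<close>, \<open>1/(1+\<beta>)\<close> when \<open>p \<le> 2\<close>, and from subadditivity of
  \<open>t \<mapsto> t\<^bsup>2/p\<^esup>\<close> when \<open>p \<ge> 2\<close>. Choosing \<open>y = Q(\<beta>)\<^sup>-\<^sup>1 x\<close> gives
  \<open>\<langle>x, y\<rangle> = y\<^sup>T Q(\<beta>) y\<close>, hence \<open>x\<^sup>T Q(\<beta>)\<^sup>-\<^sup>1 x \<le> 1\<close>.
\<close>

lemma one_le_powr_of_nonpos:
  fixes x e :: real
  assumes "0 < x" "x \<le> 1" "e \<le> 0"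
  shows "1 \<le> x powr e"
  using assms powr_mono'[of e 0 x] by simp

lemma powr_add_le_weighted:
  fixes u v w s :: real
  assumes s: "1 \<le> s" and u: "0 \<le> u" and v: "0 \<le> v" and w: "0 < w" "w < 1"
  shows "(u + v) powr s \<le> w powr (1 - s) * u powr s + (1 - w) powr (1 - s) * v powr s"
proof (cases "u = 0 \<or> v = 0")
  case True
  have "1 \<le> w powr (1 - s)" "1 \<le> (1 - w) powr (1 - s)"
    using s w by (auto intro: one_le_powr_of_nonpos)
  then show ?thesis
    using True u v by (auto simp: mult_le_cancel_right1)
next
  case False
  then have "0 < u" "0 < v"
    using u v by auto
  have "(w * (u / w) + (1 - w) * (v / (1 - w))) powr s
      \<le> w * (u / w) powr s + (1 - w) * (v / (1 - w)) powr s"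
    using convex_onD[OF powr_convex[OF s], of "1 - w" "u / w" "v / (1 - w)"] \<open>0 < u\<close> \<open>0 < v\<close> w
    by auto
  then show ?thesis
    using w \<open>0 < u\<close> \<open>0 < v\<close> by (simp add: powr_divide powr_diff)
qed

lemma powr_add_le_add_powr:
  fixes u v s :: real
  assumes s: "0 < s" "s \<le> 1" and u: "0 \<le> u" and v: "0 \<le> v"
  shows "(u + v) powr s \<le> u powr s + v powr s"
proof (cases "u + v = 0")
  case True
  then show ?thesis
    using u v by simp
next
  case False
  then have uv: "0 < u + v"
    using u v by simp
  have self_le_powr: "t \<le> t powr s" if "0 \<le> t" "t \<le> 1" for t :: real
    using that s powr_mono'[of s 1 t] by (cases "t = 0") auto
  have "(u + v) powr s = (u + v) powr s * (u / (u + v)) + (u + v) powr s * (v / (u + v))"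
    using uv by (simp add: distrib_left[symmetric] add_divide_distrib[symmetric])
  also have "\<dots> \<le> (u + v) powr s * (u / (u + v)) powr s + (u + v) powr s * (v / (u + v)) powr s"
    using u v uv by (intro add_mono mult_left_mono self_le_powr) auto
  also have "\<dots> = u powr s + v powr s"
    using u v uv by (simp add: powr_divide)
  finally show ?thesis .
qed

lemma powr_two_div_add_le_weighted:
  fixes u v w p :: real
  assumes p: "1 \<le> p" and u: "0 \<le> u" and v: "0 \<le> v" and w: "0 < w" "w < 1"
  shows "(u + v) powr (2 / p)
    \<le> w powr (- 1 / p) * u powr (2 / p) + (1 - w) powr (- 1 / p) * v powr (2 / p)"
proof (cases "p \<le> 2")
  case True
  have "w powr (1 - 2 / p) \<le> w powr (- 1 / p)" "(1 - w) powr (1 - 2 / p) \<le> (1 - w) powr (- 1 / p)"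
    using p w by (intro powr_mono'; simp add: field_simps)+
  then have "w powr (1 - 2 / p) * u powr (2 / p) + (1 - w) powr (1 - 2 / p) * v powr (2 / p)
      \<le> w powr (- 1 / p) * u powr (2 / p) + (1 - w) powr (- 1 / p) * v powr (2 / p)"
    by (intro add_mono mult_right_mono) auto
  moreover have "(u + v) powr (2 / p)
      \<le> w powr (1 - 2 / p) * u powr (2 / p) + (1 - w) powr (1 - 2 / p) * v powr (2 / p)"
    using True p u v w by (intro powr_add_le_weighted) auto
  ultimately show ?thesis
    by linarith
next
  case False
  have "1 \<le> w powr (- 1 / p)" "1 \<le> (1 - w) powr (- 1 / p)"
    using p w by (auto intro: one_le_powr_of_nonpos)
  then have "u powr (2 / p) + v powr (2 / p)
      \<le> w powr (- 1 / p) * u powr (2 / p) + (1 - w) powr (- 1 / p) * v powr (2 / p)"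
    by (intro add_mono; simp add: mult_le_cancel_right1)
  moreover have "(u + v) powr (2 / p) \<le> u powr (2 / p) + v powr (2 / p)"
    using False p u v by (intro powr_add_le_add_powr) auto
  ultimately show ?thesis
    by linarith
qed

lemma lp_norm_le_weighted_l2_norm:
  fixes a b p \<beta> :: real
  assumes a: "0 \<le> a" and b: "0 \<le> b" and p: "1 \<le> p" and \<beta>: "0 < \<beta>"
  shows "(a powr p + b powr p) powr (1 / p)
    \<le> sqrt ((1 + 1 / \<beta>) powr (1 / p) * a\<^sup>2 + (1 + \<beta>) powr (1 / p) * b\<^sup>2)"
proof -
  define w where "w = \<beta> / (1 + \<beta>)"
  have w: "0 < w" "w < 1"
    using \<beta> by (auto simp: w_def)
  have "1 + 1 / \<beta> = 1 / w" "1 + \<beta> = 1 / (1 - w)"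
    using \<beta> by (auto simp: w_def field_simps)
  then have weights: "(1 + 1 / \<beta>) powr (1 / p) = w powr (- 1 / p)"
      "(1 + \<beta>) powr (1 / p) = (1 - w) powr (- 1 / p)"
    using w by (simp_all add: powr_divide powr_minus_divide)
  have squares: "(a powr p) powr (2 / p) = a\<^sup>2" "(b powr p) powr (2 / p) = b\<^sup>2"
    using a b p by (simp_all add: powr_powr powr_numeral)
  have "(a powr p + b powr p) powr (1 / p) = sqrt ((a powr p + b powr p) powr (2 / p))"
    using powr_half_sqrt_powr[of "a powr p + b powr p" "2 / p"] by simp
  also have "\<dots> \<le> sqrt (w powr (- 1 / p) * (a powr p) powr (2 / p)
      + (1 - w) powr (- 1 / p) * (b powr p) powr (2 / p))"
    using p w by (intro real_sqrt_le_mono powr_two_div_add_le_weighted) auto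
  finally show ?thesis
    unfolding weights squares .
qed

lemma invertible_matrix_inv:
  fixes A :: "'a::semiring_1^'n^'m"
  assumes "invertible A"
  shows "A ** matrix_inv A = mat 1" and "matrix_inv A ** A = mat 1"
  using someI_ex[OF assms[unfolded invertible_def]] by (auto simp: matrix_inv_def)

lemma sym_pos_def_mat_quadratic_nonneg:
  assumes "sym_pos_def_mat Q"
  shows "0 \<le> x \<bullet> (Q *v x)"
  using assms by (cases "x = 0") (auto simp: sym_pos_def_mat_def less_imp_le)

lemma symmetric_matrix_inner_commute:
  fixes Q :: "real^'n^'n"
  assumes "transpose Q = Q"
  shows "(Q *v x) \<bullet> y = x \<bullet> (Q *v y)"
  using assms dot_lmul_matrix[of x Q y] vector_transpose_matrix[of x Q] by simp

lemma sym_pos_def_mat_invertible: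
  assumes Q: "sym_pos_def_mat Q"
  shows "invertible Q"
proof -
  have "x = 0" if "Q *v x = 0" for x
    using Q that by (auto simp: sym_pos_def_mat_def)
  then show ?thesis
    by (simp add: invertible_left_inverse matrix_left_invertible_ker)
qed

lemma sym_pos_def_mat_add:
  assumes "sym_pos_def_mat A" and "sym_pos_def_mat B"
  shows "sym_pos_def_mat (A + B)"
  using assms
  by (auto simp: sym_pos_def_mat_def transpose_def vec_eq_iff matrix_vector_mult_add_rdistrib
      inner_add_right add_pos_pos)

lemma sym_pos_def_mat_scaleR:
  assumes "sym_pos_def_mat A" and "0 < c"
  shows "sym_pos_def_mat (c *\<^sub>R A)"
  using assms
  by (auto simp: sym_pos_def_mat_def transpose_def vec_eq_iff scaleR_matrix_vector_assoc[symmetric])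

lemma sym_pos_def_mat_cauchy_schwarz:
  assumes Q: "sym_pos_def_mat Q"
  shows "x \<bullet> (Q *v y) \<le> sqrt (x \<bullet> (Q *v x)) * sqrt (y \<bullet> (Q *v y))"
proof (cases "x = 0 \<or> y = 0")
  case True
  then show ?thesis
    by auto
next
  case False
  define \<alpha> where "\<alpha> = sqrt (x \<bullet> (Q *v x))"
  define \<gamma> where "\<gamma> = sqrt (y \<bullet> (Q *v y))"
  have "0 < x \<bullet> (Q *v x)" "0 < y \<bullet> (Q *v y)"
    using Q False by (auto simp: sym_pos_def_mat_def)
  then have pos: "0 < \<alpha>" "0 < \<gamma>" and sq: "\<alpha>\<^sup>2 = x \<bullet> (Q *v x)" "\<gamma>\<^sup>2 = y \<bullet> (Q *v y)"
    by (simp_all add: \<alpha>_def \<gamma>_def)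
  have "0 \<le> (\<gamma> *\<^sub>R x - \<alpha> *\<^sub>R y) \<bullet> (Q *v (\<gamma> *\<^sub>R x - \<alpha> *\<^sub>R y))"
    by (rule sym_pos_def_mat_quadratic_nonneg[OF Q])
  also have "\<dots> = 2 * (\<alpha>\<^sup>2 * \<gamma>\<^sup>2) - 2 * (\<alpha> * \<gamma>) * (x \<bullet> (Q *v y))"
    using Q symmetric_matrix_inner_commute[of Q y x]
    by (simp add: sym_pos_def_mat_def sq[symmetric] matrix_vector_mult_diff_distrib matrix_vector_mult_scaleR
        inner_diff_left inner_diff_right inner_commute power2_eq_square algebra_simps)
  finally have "(\<alpha> * \<gamma>) * (x \<bullet> (Q *v y)) \<le> (\<alpha> * \<gamma>) * (\<alpha> * \<gamma>)"
    by (simp add: power2_eq_square algebra_simps)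
  then show ?thesis
    using pos by (simp add: \<alpha>_def[symmetric] \<gamma>_def[symmetric])
qed

lemma center_mem_ellipsoid: "q \<in> ellipsoid q Q"
  by (simp add: ellipsoid_def)

lemma ellipsoid_inner_le:
  assumes Q: "sym_pos_def_mat Q" and z: "z \<in> ellipsoid 0 Q"
  shows "z \<bullet> y \<le> sqrt (y \<bullet> (Q *v y))"
proof -
  define w where "w = matrix_inv Q *v z"
  have z_eq: "Q *v w = z"
    using invertible_matrix_inv(1)[OF sym_pos_def_mat_invertible[OF Q]]
    by (simp add: w_def matrix_vector_mul_assoc)
  have w_le: "w \<bullet> (Q *v w) \<le> 1"
    using z unfolding ellipsoid_def by (simp add: z_eq) (simp add: w_def inner_commute)
  have "z \<bullet> y = w \<bullet> (Q *v y)"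
    using Q symmetric_matrix_inner_commute[of Q w y] by (simp add: sym_pos_def_mat_def z_eq)
  also have "\<dots> \<le> sqrt (w \<bullet> (Q *v w)) * sqrt (y \<bullet> (Q *v y))"
    by (rule sym_pos_def_mat_cauchy_schwarz[OF Q])
  also have "\<dots> \<le> sqrt (y \<bullet> (Q *v y))"
    using w_le sym_pos_def_mat_quadratic_nonneg[OF Q] by (intro mult_left_le_one_le) auto
  finally show ?thesis .
qed

lemma support_fun_ellipsoid_le:
  assumes "sym_pos_def_mat Q"
  shows "support_fun (ellipsoid 0 Q) y \<le> sqrt (y \<bullet> (Q *v y))"
  unfolding support_fun_def
  using assms center_mem_ellipsoid[of 0 Q] ellipsoid_inner_le by (intro cSUP_least) auto

lemma support_fun_ellipsoid_nonneg:
  assumes "sym_pos_def_mat Q"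
  shows "0 \<le> support_fun (ellipsoid 0 Q) y"
proof -
  have "bdd_above ((\<lambda>x. x \<bullet> y) ` ellipsoid 0 Q)"
    using assms ellipsoid_inner_le by (intro bdd_aboveI2) auto
  then have "0 \<bullet> y \<le> support_fun (ellipsoid 0 Q) y"
    unfolding support_fun_def using center_mem_ellipsoid by (intro cSUP_upper)
  then show ?thesis
    by simp
qed

lemma mem_ellipsoid_if_inner_le:
  assumes Q: "sym_pos_def_mat Q" and le: "\<And>y. x \<bullet> y \<le> sqrt (y \<bullet> (Q *v y))"
  shows "x \<in> ellipsoid 0 Q"
proof -
  define y where "y = matrix_inv Q *v x"
  have "Q *v y = x"
    using invertible_matrix_inv(1)[OF sym_pos_def_mat_invertible[OF Q]]
    by (simp add: y_def matrix_vector_mul_assoc)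
  then have le_sqrt: "x \<bullet> y \<le> sqrt (x \<bullet> y)"
    using le[of y] by (simp add: inner_commute)
  have "x \<bullet> y \<le> 1"
  proof (cases "x \<bullet> y \<le> 0")
    case False
    then have pos: "0 < sqrt (x \<bullet> y)"
      by simp
    have "sqrt (x \<bullet> y) * sqrt (x \<bullet> y) \<le> sqrt (x \<bullet> y) * 1"
      using le_sqrt False by simp
    then have "sqrt (x \<bullet> y) \<le> 1"
      using mult_le_cancel_left_pos[OF pos] by blast
    then show ?thesis
      by simp
  qed simp
  then show ?thesis
    by (simp add: ellipsoid_def y_def)
qed

lemma firey_sum_ellipsoids_inner_le:
  assumes p: "0 < p" and Q1: "sym_pos_def_mat Q1" and Q2: "sym_pos_def_mat Q2"
    and x: "x \<in> firey_sum p (ellipsoid 0 Q1) (ellipsoid 0 Q2)"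
  shows "x \<bullet> y \<le> (sqrt (y \<bullet> (Q1 *v y)) powr p + sqrt (y \<bullet> (Q2 *v y)) powr p) powr (1 / p)"
proof -
  let ?h1 = "support_fun (ellipsoid 0 Q1) y" and ?h2 = "support_fun (ellipsoid 0 Q2) y"
  have "x \<bullet> y \<le> (?h1 powr p + ?h2 powr p) powr (1 / p)"
    using x by (simp add: firey_sum_def)
  also have "\<dots> \<le> (sqrt (y \<bullet> (Q1 *v y)) powr p + sqrt (y \<bullet> (Q2 *v y)) powr p) powr (1 / p)"
    using p Q1 Q2
    by (intro powr_mono2 add_mono support_fun_ellipsoid_le support_fun_ellipsoid_nonneg) auto
  finally show ?thesis .
qed

theorem theorem1:
  fixes Q1 Q2 :: "real^'n^'n" and p \<beta> :: real
  assumes "1 \<le> p" and "p \<noteq> 2" and "\<beta> > 0"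
    and "sym_pos_def_mat Q1" and "sym_pos_def_mat Q2"
  shows "firey_sum p (ellipsoid 0 Q1) (ellipsoid 0 Q2) \<subseteq>
         ellipsoid 0 ((1 + 1/\<beta>) powr (1/p) *\<^sub>R Q1 + (1 + \<beta>) powr (1/p) *\<^sub>R Q2)"
proof
  fix x
  assume x: "x \<in> firey_sum p (ellipsoid 0 Q1) (ellipsoid 0 Q2)"
  let ?Q = "(1 + 1/\<beta>) powr (1/p) *\<^sub>R Q1 + (1 + \<beta>) powr (1/p) *\<^sub>R Q2"
  have "0 < 1 + 1/\<beta>"
    using \<open>\<beta> > 0\<close> by (simp add: field_simps)
  then have "sym_pos_def_mat ?Q"
    using assms by (intro sym_pos_def_mat_add sym_pos_def_mat_scaleR) auto
  then show "x \<in> ellipsoid 0 ?Q"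
  proof (rule mem_ellipsoid_if_inner_le)
    fix y
    let ?a = "sqrt (y \<bullet> (Q1 *v y))" and ?b = "sqrt (y \<bullet> (Q2 *v y))"
    have "x \<bullet> y \<le> (?a powr p + ?b powr p) powr (1 / p)"
      using assms x by (intro firey_sum_ellipsoids_inner_le) auto
    also have "\<dots> \<le> sqrt ((1 + 1/\<beta>) powr (1/p) * ?a\<^sup>2 + (1 + \<beta>) powr (1/p) * ?b\<^sup>2)"
      using assms sym_pos_def_mat_quadratic_nonneg by (intro lp_norm_le_weighted_l2_norm) auto
    also have "\<dots> = sqrt (y \<bullet> (?Q *v y))"
      using sym_pos_def_mat_quadratic_nonneg[OF assms(4), of y]
        sym_pos_def_mat_quadratic_nonneg[OF assms(5), of y]
      by (simp add: matrix_vector_mult_add_rdistrib scaleR_matrix_vector_assoc[symmetric]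
          inner_add_right)
    finally show "x \<bullet> y \<le> sqrt (y \<bullet> (?Q *v y))" .
  qed
qed

end
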